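(* Let $p$ be a prime and $j,a,b\in\mathbb{N}$. Then \[c_j(p^{a+b})=\sum_{k=0}^{j-1}(-1)^{k-j+1}\binom{j}{k+1} d_{k+1}(p^b)\,\frac{(b+k+1)^{\overline a}}{(b+1)^{\overline a}}.\]
   Context: For $j,n\in\mathbb{N}$, $d_j(n)$ is the number of ordered $j$-tuples of positive integers with product $n$, and $c_j(n)$ is the number of ordered $j$-tuples of integers each $\ge 2$ with product $n$. The rising factorial is $x^{\overline a}=\prod_{i=0}^{a-1}(x+i)$. *)

theory Defs
  imports Complex_Main "HOL-Computational_Algebra.Primes"
begin

definition dfun :: "nat \<Rightarrow> nat \<Rightarrow> nat" where
  "dfun j n = card {xs :: nat list. length xs = j \<and> (\<forall>x\<in>set xs. x \<ge> 1) \<and> prod_list xs = n}"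

definition cfun :: "nat \<Rightarrow> nat \<Rightarrow> nat" where
  "cfun j n = card {xs :: nat list. length xs = j \<and> (\<forall>x\<in>set xs. x \<ge> 2) \<and> prod_list xs = n}"

end

theory Submission
  imports Defs
begin

text \<open>Every factor of \<open>p^n\<close> is a power of \<open>p\<close>, so ordered factorizations of \<open>p^n\<close> into
\<open>m\<close> factors correspond to compositions of the exponent \<open>n\<close> into \<open>m\<close> parts. Hence
\<open>d_m(p^n) = C(n+m-1, n)\<close> (nonnegative parts) and \<open>c_j(p^n) = C(n-1, j-1)\<close> (positive parts).
The Pochhammer quotient turns \<open>d_(k+1)(p^b)\<close> into \<open>d_(k+1)(p^(a+b))\<close>, and what remains,
\<open>c_j(p^n) = \<Sum>i\<le>j. (-1)^(i+j) C(j,i) d_i(p^n)\<close>, evaluates a \<open>j\<close>-th finite difference of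
\<open>i \<mapsto> C(n-1+i, n)\<close>; induction on \<open>j\<close> with Pascal's rule lowers \<open>n\<close> by one per difference.\<close>

lemma prod_list_map_power: "prod_list (map ((^) p) es) = (p::'a::comm_monoid_mult) ^ sum_list es"
  by (induction es) (simp_all add: power_add)

lemma prod_list_eq_prime_power_iff:
  fixes p :: nat
  assumes "prime p"
  shows "prod_list xs = p ^ n \<longleftrightarrow> (\<exists>es. xs = map ((^) p) es \<and> sum_list es = n)"
proof
  show "prod_list xs = p ^ n \<Longrightarrow> \<exists>es. xs = map ((^) p) es \<and> sum_list es = n"
  proof (induction xs arbitrary: n)
    case Nil
    then have "p ^ n = 1"
      by simp
    with prime_gt_1_nat[OF assms] show ?case
      by (simp add: power_eq_1_iff)
  next
    case (Cons x xs)
    then have "x dvd p ^ n"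
      by (metis dvd_triv_left prod_list.Cons)
    then obtain i where i: "i \<le> n" "x = p ^ i"
      using divides_primepow_nat[OF assms] by blast
    with Cons.prems have "p ^ i * prod_list xs = p ^ i * p ^ (n - i)"
      by (simp flip: power_add)
    then have "prod_list xs = p ^ (n - i)"
      using prime_gt_0_nat[OF assms] by simp
    then obtain es where "xs = map ((^) p) es" "sum_list es = n - i"
      using Cons.IH by blast
    with i show ?case
      by (intro exI[of _ "i # es"]) simp
  qed
qed (auto simp: prod_list_map_power)

lemma card_factorizations_prime_power:
  fixes p :: nat
  assumes "prime p"
  shows "card {xs. length xs = m \<and> (\<forall>x\<in>set xs. P x) \<and> prod_list xs = p ^ n} =
         card {es. length es = m \<and> (\<forall>e\<in>set es. P (p ^ e)) \<and> sum_list es = n}"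
proof -
  have "inj ((^) p)"
    using assms prime_gt_1_nat by (auto intro: injI simp: power_inject_exp)
  then have "inj (map ((^) p))"
    by (rule inj_mapI)
  moreover have "{xs. length xs = m \<and> (\<forall>x\<in>set xs. P x) \<and> prod_list xs = p ^ n} =
      map ((^) p) ` {es. length es = m \<and> (\<forall>e\<in>set es. P (p ^ e)) \<and> sum_list es = n}"
    using prod_list_eq_prime_power_iff[OF assms] by (auto simp: prod_list_map_power)
  ultimately show ?thesis
    by (simp add: card_image inj_on_subset[OF _ subset_UNIV])
qed

lemma sum_list_map_Suc: "sum_list (map Suc l) = sum_list l + length l"
  by (induction l) simp_all

lemma card_length_sum_list_pos:
  "card {l::nat list. length l = m \<and> (\<forall>x\<in>set l. 0 < x) \<and> sum_list l = N + m} = (N + m - 1) choose N"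
proof -
  have "{l::nat list. length l = m \<and> (\<forall>x\<in>set l. 0 < x) \<and> sum_list l = N + m} =
        map Suc ` {l. length l = m \<and> sum_list l = N}"
  proof (intro set_eqI iffI)
    fix l :: "nat list"
    assume l: "l \<in> {l. length l = m \<and> (\<forall>x\<in>set l. 0 < x) \<and> sum_list l = N + m}"
    define k where "k = map (\<lambda>x. x - 1) l"
    have "l = map Suc k"
      using l by (simp add: k_def map_idI)
    with l show "l \<in> map Suc ` {l. length l = m \<and> sum_list l = N}"
      by (auto simp: sum_list_map_Suc)
  qed (auto simp: sum_list_map_Suc)
  then show ?thesis
    by (simp add: card_image inj_on_subset[OF inj_mapI] card_length_sum_list)
qed

lemma dfun_prime_power:
  assumes "prime p"
  shows "dfun m (p ^ n) = (n + m - 1) choose n"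
proof -
  have "0 < p"
    using assms prime_gt_0_nat by blast
  then show ?thesis
    unfolding dfun_def card_factorizations_prime_power[OF assms]
    by (simp add: Suc_le_eq card_length_sum_list)
qed

lemma cfun_prime_power:
  assumes "prime p" "0 < j" "0 < n"
  shows "cfun j (p ^ n) = (n - 1) choose (j - 1)"
proof -
  have "2 \<le> p ^ e \<longleftrightarrow> 0 < e" for e
    using prime_ge_2_nat[OF assms(1)] self_le_power[of p e] by (cases "e = 0") auto
  then have cfun_eq: "cfun j (p ^ n) = card {es. length es = j \<and> (\<forall>e\<in>set es. 0 < e) \<and> sum_list es = n}"
    unfolding cfun_def card_factorizations_prime_power[OF assms(1)] by simp
  show ?thesis
  proof (cases "j \<le> n")
    case True
    then have "cfun j (p ^ n) = (n - 1) choose (n - j)"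
      using cfun_eq card_length_sum_list_pos[of j "n - j"] by simp
    moreover have "n - 1 - (j - 1) = n - j"
      using assms(2) by simp
    ultimately show ?thesis
      using binomial_symmetric[of "j - 1" "n - 1"] True by simp
  next
    case False
    have "length es \<le> sum_list es" if "\<forall>e\<in>set es. 0 < e" for es :: "nat list"
      using that by (induction es) auto
    with False have no_compositions: "{es. length es = j \<and> (\<forall>e\<in>set es. 0 < e) \<and> sum_list es = n} = {}"
      by fastforce
    from False assms(3) show ?thesis
      unfolding cfun_eq no_compositions by simp
  qed
qed

lemma alternating_binomial_sum_Suc:
  fixes f :: "nat \<Rightarrow> 'a::comm_ring_1"
  shows "(\<Sum>i\<le>Suc j. (-1) ^ i * of_nat (Suc j choose i) * f i) =
         (\<Sum>i\<le>j. (-1) ^ i * of_nat (j choose i) * (f i - f (Suc i)))"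
proof -
  have shift: "(\<Sum>i\<le>Suc j. g i) = g 0 + (\<Sum>i\<le>j. g (Suc i))" for g :: "nat \<Rightarrow> 'a"
    by (rule sum.atMost_Suc_shift)
  have pascal: "(\<Sum>i\<le>Suc j. (-1) ^ i * of_nat (Suc j choose i) * f i) =
        f 0 - (\<Sum>i\<le>j. (-1) ^ i * of_nat (j choose Suc i) * f (Suc i))
            - (\<Sum>i\<le>j. (-1) ^ i * of_nat (j choose i) * f (Suc i))"
    unfolding shift by (simp add: ring_distribs sum.distrib sum_negf sum_subtractf)
  have "f 0 - (\<Sum>i\<le>j. (-1) ^ i * of_nat (j choose Suc i) * f (Suc i)) =
        (\<Sum>i\<le>Suc j. (-1) ^ i * of_nat (j choose i) * f i)"
    unfolding shift by (simp add: sum_negf)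
  also have "\<dots> = (\<Sum>i\<le>j. (-1) ^ i * of_nat (j choose i) * f i)"
    by (simp add: binomial_eq_0)
  finally have shifted: "f 0 - (\<Sum>i\<le>j. (-1) ^ i * of_nat (j choose Suc i) * f (Suc i)) =
                         (\<Sum>i\<le>j. (-1) ^ i * of_nat (j choose i) * f i)" .
  show ?thesis
    unfolding pascal shifted by (simp add: right_diff_distrib sum_subtractf)
qed

lemma alternating_binomial_sum_choose:
  "(\<Sum>i\<le>j. (-1) ^ i * of_nat (j choose i) * of_nat ((s + i) choose n)) =
   (if j \<le> n then (-1) ^ j * of_nat (s choose (n - j)) else (0::'a::comm_ring_1))"
proof (induction j arbitrary: n)
  case 0
  then show ?case
    by simp
next
  case (Suc j)
  show ?case
  proof (cases n)
    case 0
    then show ?thesis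
      unfolding alternating_binomial_sum_Suc by simp
  next
    case (Suc n')
    have "of_nat ((s + i) choose n) - of_nat ((s + Suc i) choose n) = - (of_nat ((s + i) choose n') :: 'a)" for i
      by (simp add: Suc)
    then show ?thesis
      unfolding alternating_binomial_sum_Suc using Suc.IH[of n'] by (simp add: Suc sum_negf)
  qed
qed

lemma binomial_mult_pochhammer_quotient:
  "of_nat ((b + k) choose b) * (pochhammer (of_nat (b + k + 1)) a / pochhammer (of_nat (b + 1)) a) =
   (of_nat ((a + b + k) choose (a + b)) :: 'a::field_char_0)"
proof -
  have binomial: "of_nat ((m + k) choose m) = pochhammer (of_nat m + 1) k / (fact k :: 'a)" for m
  proof -
    have "(m + k) choose m = (m + k) choose k"
      using binomial_symmetric[of k "m + k"] by simp
    then show ?thesis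
      by (simp add: binomial_gbinomial gbinomial_pochhammer')
  qed
  have "pochhammer (of_nat (b + 1)) a \<noteq> (0::'a)"
    unfolding pochhammer_of_nat of_nat_eq_0_iff using pochhammer_pos[of "b + 1" a] by simp
  moreover have "pochhammer (of_nat b + 1) k * pochhammer (of_nat (b + k + 1)) a =
                 pochhammer (of_nat (b + 1)) a * (pochhammer (of_nat (a + b) + 1) k :: 'a)"
    using pochhammer_product'[of "of_nat b + 1 :: 'a" k a] pochhammer_product'[of "of_nat b + 1 :: 'a" a k]
    by (simp add: add.commute add.left_commute)
  ultimately show ?thesis
    unfolding binomial by (simp add: field_simps)
qed

lemma dfun_prime_power_mult_pochhammer_quotient:
  assumes "prime p"
  shows "real (dfun (k + 1) (p ^ b)) * (pochhammer (real (b + k + 1)) a / pochhammer (real (b + 1)) a) =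
         real (dfun (k + 1) (p ^ (a + b)))"
  using binomial_mult_pochhammer_quotient[of b k a] by (simp add: dfun_prime_power[OF assms] add.assoc)

lemma cfun_prime_power_alternating_sum_dfun:
  assumes "prime p" "0 < j" "0 < n"
  shows "real (cfun j (p ^ n)) = (\<Sum>i\<le>j. (-1) ^ (i + j) * real (j choose i) * real (dfun i (p ^ n)))"
proof -
  have "(\<Sum>i\<le>j. (-1) ^ (i + j) * real (j choose i) * real (dfun i (p ^ n))) =
        (-1) ^ j * (\<Sum>i\<le>j. (-1) ^ i * real (j choose i) * real ((n - 1 + i) choose n))"
    using assms(3) by (simp add: dfun_prime_power[OF assms(1)] sum_distrib_left power_add algebra_simps)
  also have "\<dots> = (if j \<le> n then real ((n - 1) choose (n - j)) else 0)"
    by (simp add: alternating_binomial_sum_choose flip: power_add)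
  also have "\<dots> = real ((n - 1) choose (j - 1))"
    using assms(2,3) binomial_symmetric[of "j - 1" "n - 1"] by (auto simp: Suc_diff_le binomial_eq_0)
  finally show ?thesis
    by (simp add: cfun_prime_power[OF assms])
qed

lemma minus_one_power_int_diff: "(-1::'a::division_ring) powi (int i - int j) = (-1) ^ (i + j)"
  by (simp add: power_int_minus_left minus_one_power_iff even_add)

theorem lemma10:
  fixes p j a b :: nat
  assumes "prime p" and "j \<ge> 1" and "a \<ge> 1" and "b \<ge> 1"
  shows "real (cfun j (p ^ (a + b))) =
    (\<Sum>k = 0..j - 1. (-1::real) powi (int k - int j + 1) * real (j choose (k + 1))
       * real (dfun (k + 1) (p ^ b))
       * (pochhammer (real (b + k + 1)) a / pochhammer (real (b + 1)) a))"
proof -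
  define h where "h i = (-1) ^ (i + j) * real (j choose i) * real (dfun i (p ^ (a + b)))" for i
  have "0 < j" "0 < a + b"
    using assms(2,3) by simp_all
  have summand: "(-1::real) powi (int k - int j + 1) * real (j choose (k + 1)) * real (dfun (k + 1) (p ^ b))
       * (pochhammer (real (b + k + 1)) a / pochhammer (real (b + 1)) a) = h (k + 1)" for k
  proof -
    have "int k - int j + 1 = int (Suc k) - int j"
      by simp
    then have sign: "(-1::real) powi (int k - int j + 1) = (-1) ^ (k + 1 + j)"
      by (simp only: minus_one_power_int_diff Suc_eq_plus1)
    show ?thesis
      by (simp only: h_def sign mult.assoc dfun_prime_power_mult_pochhammer_quotient[OF assms(1)])
  qed
  have "h 0 = 0"
    using \<open>0 < a + b\<close> by (simp add: h_def dfun_prime_power[OF assms(1)])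
  then have "(\<Sum>k = 0..j - 1. h (k + 1)) = (\<Sum>i\<le>j. h i)"
    using \<open>0 < j\<close> sum.atMost_Suc_shift[of h "j - 1"] by (simp add: atLeast0AtMost)
  also have "\<dots> = real (cfun j (p ^ (a + b)))"
    unfolding h_def using cfun_prime_power_alternating_sum_dfun[OF assms(1) \<open>0 < j\<close> \<open>0 < a + b\<close>] ..
  finally show ?thesis
    unfolding summand by (rule sym)
qed

end
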